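(* Let $p\ge2$ be a fixed integer and let $\lambda,\mu$ be integral partitions all of whose entries are powers $p^i$ ($i\ge0$) of $p$. Then $\lambda\hookrightarrow\mu$ if and only if $\lambda\preccurlyeq_S\mu$.
   Context: An integral partition is a finite nonincreasing sequence of positive integers. $\lambda=[\lambda_1,\ldots,\lambda_m]$ embeds into $\mu=[\mu_1,\ldots,\mu_n]$, written $\lambda\hookrightarrow\mu$, if there is a map $\varphi:\{1,\ldots,m\}\to\{1,\ldots,n\}$ with $\sum_{i\in\varphi^{-1}(j)}\lambda_i\le\mu_j$ for all $j$. $\lambda\preccurlyeq_S\mu$ ($\mu$ supermajorizes $\lambda$) means: for every $x\in\mathbb N$, $\sum_{\lambda_i\ge x}\lambda_i\le\sum_{\mu_j\ge x}\mu_j$. *)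

theory Defs
  imports Main
begin

definition integral_partition :: "nat list \<Rightarrow> bool" where
  "integral_partition xs \<longleftrightarrow> sorted_wrt (\<ge>) xs \<and> (\<forall>x\<in>set xs. x > 0)"

definition embeds :: "nat list \<Rightarrow> nat list \<Rightarrow> bool" where
  "embeds lam mu \<longleftrightarrow>
     (\<exists>\<phi>::nat \<Rightarrow> nat. (\<forall>i<length lam. \<phi> i < length mu) \<and>
        (\<forall>j<length mu. (\<Sum>i\<in>{i. i < length lam \<and> \<phi> i = j}. lam ! i) \<le> mu ! j))"

definition supermajorized :: "nat list \<Rightarrow> nat list \<Rightarrow> bool" where
  "supermajorized lam mu \<longleftrightarrow>
     (\<forall>x::nat. sum_list (filter (\<lambda>a. a \<ge> x) lam) \<le> sum_list (filter (\<lambda>b. b \<ge> x) mu))"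

end

theory Submission
  imports Defs "HOL-Combinatorics.Permutations"
begin

(* An embedding sends every part of lam that is at least x into a part of mu whose value bounds
   the whole fibre, hence is at least x as well; summing over fibres gives supermajorization.
   Conversely, for parts that are powers of p, embed greedily: let a be the largest part of lam
   and b the largest part of mu, so a \<le> b by supermajorization at x = a. If b = a, match the
   two parts and recurse. Otherwise b = p c with a \<le> c, and replacing b by p copies of c
   preserves supermajorization (thresholds above c see no part of lam) while the new list still
   embeds into mu. Each step decreases the sum of squares of the parts of mu. *)

lemma sum_list_filter_conv_sum_nth:
  "sum_list (filter P xs) = (\<Sum>i<length xs. if P (xs ! i) then xs ! i else 0)"
  by (induction xs) (simp_all add: sum.lessThan_Suc_shift del: sum.lessThan_Suc cong: if_cong)

lemma sum_list_filter_remove1: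
  fixes xs :: "'a::comm_monoid_add list"
  shows "x \<in> set xs \<Longrightarrow>
    sum_list (filter P xs) = (if P x then x else 0) + sum_list (filter P (remove1 x xs))"
  by (induction xs) (auto simp: add.left_commute)

lemma embeds_imp_supermajorized:
  assumes "embeds lam mu"
  shows "supermajorized lam mu"
  unfolding supermajorized_def
proof
  fix x :: nat
  obtain \<phi> where \<phi>_range: "\<forall>i<length lam. \<phi> i < length mu"
    and fibre_le: "\<forall>j<length mu. (\<Sum>i\<in>{i. i < length lam \<and> \<phi> i = j}. lam ! i) \<le> mu ! j"
    using assms unfolding embeds_def by blast
  define g where "g i = (if x \<le> lam ! i then lam ! i else 0)" for i
  have "sum_list (filter (\<lambda>a. a \<ge> x) lam) = (\<Sum>i<length lam. g i)"
    by (simp add: sum_list_filter_conv_sum_nth g_def)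
  also have "\<dots> = (\<Sum>j<length mu. \<Sum>i\<in>{i. i < length lam \<and> \<phi> i = j}. g i)"
    using sum.group[of "{..<length lam}" "{..<length mu}" \<phi> g] \<phi>_range
    by (simp add: image_subset_iff)
  also have "\<dots> \<le> (\<Sum>j<length mu. if x \<le> mu ! j then mu ! j else 0)"
  proof (rule sum_mono)
    fix j assume "j \<in> {..<length mu}"
    define F where "F = {i. i < length lam \<and> \<phi> i = j}"
    have F_le: "(\<Sum>i\<in>F. lam ! i) \<le> mu ! j"
      using fibre_le \<open>j \<in> {..<length mu}\<close> by (auto simp: F_def)
    show "(\<Sum>i\<in>F. g i) \<le> (if x \<le> mu ! j then mu ! j else 0)"
    proof (cases "x \<le> mu ! j")
      case True
      have "(\<Sum>i\<in>F. g i) \<le> (\<Sum>i\<in>F. lam ! i)"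
        by (rule sum_mono) (simp add: g_def)
      with True F_le show ?thesis by simp
    next
      case False
      have "g i = 0" if "i \<in> F" for i
      proof -
        have "lam ! i \<le> (\<Sum>i\<in>F. lam ! i)"
          using member_le_sum[OF that, of "\<lambda>i. lam ! i"] by (simp add: F_def)
        with F_le False show ?thesis by (simp add: g_def)
      qed
      then show ?thesis by simp
    qed
  qed
  also have "\<dots> = sum_list (filter (\<lambda>b. b \<ge> x) mu)"
    by (simp add: sum_list_filter_conv_sum_nth)
  finally show "sum_list (filter (\<lambda>a. a \<ge> x) lam) \<le> sum_list (filter (\<lambda>b. b \<ge> x) mu)" .
qed

lemma embeds_trans:
  assumes "embeds xs ys" and "embeds ys zs"
  shows "embeds xs zs"
proof -
  obtain \<phi> where \<phi>_range: "\<forall>i<length xs. \<phi> i < length ys"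
    and \<phi>_fibre: "\<forall>j<length ys. (\<Sum>i\<in>{i. i < length xs \<and> \<phi> i = j}. xs ! i) \<le> ys ! j"
    using assms(1) unfolding embeds_def by blast
  obtain \<psi> where \<psi>_range: "\<forall>i<length ys. \<psi> i < length zs"
    and \<psi>_fibre: "\<forall>k<length zs. (\<Sum>j\<in>{j. j < length ys \<and> \<psi> j = k}. ys ! j) \<le> zs ! k"
    using assms(2) unfolding embeds_def by blast
  have "(\<Sum>i\<in>{i. i < length xs \<and> \<psi> (\<phi> i) = k}. xs ! i) \<le> zs ! k" if "k < length zs" for k
  proof -
    let ?J = "{j. j < length ys \<and> \<psi> j = k}"
    have "(\<Sum>i\<in>{i. i < length xs \<and> \<psi> (\<phi> i) = k}. xs ! i)
        = (\<Sum>j\<in>?J. \<Sum>i\<in>{i. i < length xs \<and> \<phi> i = j}. xs ! i)"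
      by (subst sum.group[symmetric, where g = \<phi> and T = ?J])
        (use \<phi>_range in \<open>auto intro!: sum.cong\<close>)
    also have "\<dots> \<le> (\<Sum>j\<in>?J. ys ! j)"
      by (rule sum_mono) (use \<phi>_fibre in auto)
    also have "\<dots> \<le> zs ! k"
      using \<psi>_fibre that by auto
    finally show ?thesis .
  qed
  with \<phi>_range \<psi>_range show ?thesis
    unfolding embeds_def by (intro exI[of _ "\<psi> \<circ> \<phi>"]) auto
qed

lemma embeds_Cons:
  assumes "embeds xs ys"
  shows "embeds (a # xs) (a # ys)"
proof -
  obtain \<phi> where \<phi>_range: "\<forall>i<length xs. \<phi> i < length ys"
    and \<phi>_fibre: "\<forall>j<length ys. (\<Sum>i\<in>{i. i < length xs \<and> \<phi> i = j}. xs ! i) \<le> ys ! j"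
    using assms unfolding embeds_def by blast
  define \<psi> where "\<psi> i = (case i of 0 \<Rightarrow> 0 | Suc i' \<Rightarrow> Suc (\<phi> i'))" for i
  have "(\<Sum>i\<in>{i. i < length (a # xs) \<and> \<psi> i = j}. (a # xs) ! i) \<le> (a # ys) ! j"
    if "j < length (a # ys)" for j
  proof (cases j)
    case 0
    then have "{i. i < length (a # xs) \<and> \<psi> i = j} = {0}"
      by (auto simp: \<psi>_def split: nat.split_asm)
    with 0 show ?thesis by simp
  next
    case (Suc k)
    then have "{i. i < length (a # xs) \<and> \<psi> i = j} = Suc ` {i. i < length xs \<and> \<phi> i = k}"
      by (auto simp: \<psi>_def image_iff split: nat.split_asm)
    with Suc that \<phi>_fibre show ?thesis by (simp add: sum.reindex)
  qed
  moreover have "\<forall>i<length (a # xs). \<psi> i < length (a # ys)"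
    using \<phi>_range by (auto simp: \<psi>_def split: nat.splits)
  ultimately show ?thesis
    unfolding embeds_def by blast
qed

lemma embeds_append_sum_list: "embeds (xs @ ys) (sum_list xs # ys)"
proof -
  define \<phi> where "\<phi> i = (if i < length xs then 0 else Suc (i - length xs))" for i
  have "(\<Sum>i\<in>{i. i < length (xs @ ys) \<and> \<phi> i = j}. (xs @ ys) ! i) \<le> (sum_list xs # ys) ! j"
    if "j < length (sum_list xs # ys)" for j
  proof (cases j)
    case 0
    then have "{i. i < length (xs @ ys) \<and> \<phi> i = j} = {..<length xs}"
      by (auto simp: \<phi>_def)
    with 0 show ?thesis
      by (simp add: nth_append sum_list_sum_nth atLeast0LessThan)
  next
    case (Suc k)
    with that have "{i. i < length (xs @ ys) \<and> \<phi> i = j} = {k + length xs}"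
      by (auto simp: \<phi>_def)
    with Suc show ?thesis by (simp add: nth_append)
  qed
  moreover have "\<forall>i<length (xs @ ys). \<phi> i < length (sum_list xs # ys)"
    by (auto simp: \<phi>_def)
  ultimately show ?thesis
    unfolding embeds_def by blast
qed

lemma embeds_if_mset_eq:
  assumes "mset xs = mset ys"
  shows "embeds xs ys"
proof -
  obtain \<pi> where \<pi>: "\<pi> permutes {..<length ys}" and xs_eq: "permute_list \<pi> ys = xs"
    using mset_eq_permutation[of xs ys] assms by metis
  have length_eq: "length xs = length ys"
    using xs_eq by auto
  have "(\<Sum>i\<in>{i. i < length xs \<and> \<pi> i = j}. xs ! i) \<le> ys ! j" if "j < length ys" for j
  proof -
    define i where "i = inv \<pi> j"
    have i: "i < length ys" "\<pi> i = j"
      using permutes_in_image[OF permutes_inv[OF \<pi>]] permutes_inverses(1)[OF \<pi>] that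
      by (auto simp: i_def)
    then have "{i. i < length xs \<and> \<pi> i = j} = {i}"
      using length_eq permutes_inj[OF \<pi>] by (auto simp: inj_eq)
    moreover have "xs ! i = ys ! j"
      using permute_list_nth[OF \<pi> i(1)] xs_eq i(2) by simp
    ultimately show ?thesis
      by simp
  qed
  moreover have "\<forall>i<length xs. \<pi> i < length ys"
    using permutes_in_image[OF \<pi>] length_eq by auto
  ultimately show ?thesis
    unfolding embeds_def by blast
qed

lemma supermajorized_remove1_iff:
  assumes "b \<in> set ys"
  shows "supermajorized xs ys \<longleftrightarrow> supermajorized xs (b # remove1 b ys)"
  using sum_list_filter_remove1[OF assms] by (simp add: supermajorized_def)

lemma supermajorized_Cons_imp_le_Max:
  assumes "supermajorized (a # xs) ys" and "0 < a"
  shows "Max (set ys) \<in> set ys" and "a \<le> Max (set ys)"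
proof -
  have "a \<le> sum_list (filter (\<lambda>b. b \<ge> a) (a # xs))"
    by simp
  also have "\<dots> \<le> sum_list (filter (\<lambda>b. b \<ge> a) ys)"
    using assms(1) unfolding supermajorized_def by blast
  finally have "filter (\<lambda>b. b \<ge> a) ys \<noteq> []"
    using assms(2) by auto
  then obtain y where "y \<in> set ys" and "a \<le> y"
    by (auto simp: filter_empty_conv)
  then show "Max (set ys) \<in> set ys" and "a \<le> Max (set ys)"
    using Max_ge[of "set ys" y] by (auto intro: le_trans Max_in)
qed

lemma supermajorized_Cons_cancel:
  assumes "supermajorized (a # xs) (a # ys)" and "\<forall>x\<in>set xs. x \<le> a"
  shows "supermajorized xs ys"
  unfolding supermajorized_def
proof
  fix x :: nat
  show "sum_list (filter (\<lambda>a. a \<ge> x) xs) \<le> sum_list (filter (\<lambda>b. b \<ge> x) ys)"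
  proof (cases "x \<le> a")
    case True
    with assms(1) show ?thesis
      unfolding supermajorized_def by (metis add_le_cancel_left filter.simps(2) sum_list.Cons)
  next
    case False
    with assms(2) have "filter (\<lambda>a. a \<ge> x) xs = []"
      by (auto simp: filter_empty_conv)
    then show ?thesis by simp
  qed
qed

lemma supermajorized_split_part:
  assumes "supermajorized xs (n * c # ys)" and "\<forall>x\<in>set xs. x \<le> c"
  shows "supermajorized xs (replicate n c @ ys)"
  unfolding supermajorized_def
proof
  fix x :: nat
  show "sum_list (filter (\<lambda>a. a \<ge> x) xs) \<le> sum_list (filter (\<lambda>b. b \<ge> x) (replicate n c @ ys))"
  proof (cases "x \<le> c")
    case True
    then have "sum_list (filter (\<lambda>b. b \<ge> x) (n * c # ys))
        = sum_list (filter (\<lambda>b. b \<ge> x) (replicate n c @ ys))"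
      by (cases n) (auto simp: sum_list_replicate intro: order_trans)
    with assms(1) show ?thesis
      unfolding supermajorized_def by metis
  next
    case False
    with assms(2) have "filter (\<lambda>a. a \<ge> x) xs = []"
      by (auto simp: filter_empty_conv)
    then show ?thesis by simp
  qed
qed

lemma supermajorized_split_largest_power:
  fixes p :: nat
  assumes p: "2 \<le> p" and "p ^ k < p ^ j"
    and sup: "supermajorized xs (p ^ j # ys)" and xs_le: "\<forall>x\<in>set xs. x \<le> p ^ k"
  obtains zs where "supermajorized xs zs" and "embeds zs (p ^ j # ys)"
    and "(\<Sum>z\<leftarrow>zs. z\<^sup>2) < (p ^ j)\<^sup>2 + (\<Sum>y\<leftarrow>ys. y\<^sup>2)"
    and "set zs \<subseteq> insert (p ^ (j - 1)) (set ys)"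
proof
  define c where "c = p ^ (j - 1)"
  have "k < j"
    using assms(2) p by (simp add: power_less_imp_less_exp)
  then have pc: "p ^ j = p * c"
    by (cases j) (simp_all add: c_def)
  have "p ^ k \<le> c"
    using \<open>k < j\<close> p by (simp add: c_def power_increasing)
  define zs where "zs = replicate p c @ ys"
  show "supermajorized xs zs"
    using supermajorized_split_part[OF sup[unfolded pc]] xs_le \<open>p ^ k \<le> c\<close>
    by (auto simp: zs_def intro: le_trans)
  show "embeds zs (p ^ j # ys)"
    using embeds_append_sum_list[of "replicate p c" ys] pc by (simp add: zs_def sum_list_replicate)
  have "0 < c"
    using p by (simp add: c_def)
  with p show "(\<Sum>z\<leftarrow>zs. z\<^sup>2) < (p ^ j)\<^sup>2 + (\<Sum>y\<leftarrow>ys. y\<^sup>2)"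
    by (simp add: pc zs_def sum_list_replicate power2_eq_square)
  show "set zs \<subseteq> insert (p ^ (j - 1)) (set ys)"
    by (auto simp: zs_def c_def)
qed

lemma supermajorized_imp_embeds_powers:
  fixes p :: nat
  assumes p: "2 \<le> p"
    and "sorted_wrt (\<ge>) xs" and "\<forall>a\<in>set xs. \<exists>i. a = p ^ i" and "\<forall>b\<in>set ys. \<exists>i. b = p ^ i"
    and "supermajorized xs ys"
  shows "embeds xs ys"
  using assms(2-)
proof (induction "\<Sum>y\<leftarrow>ys. y\<^sup>2" arbitrary: xs ys rule: less_induct)
  case less
  show ?case
  proof (cases xs)
    case Nil
    then show ?thesis
      unfolding embeds_def by simp
  next
    case (Cons a xs')
    obtain k where a: "a = p ^ k"
      using less.prems(2) Cons by auto
    have xs_le: "\<forall>x\<in>set xs. x \<le> a"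
      using less.prems(1) Cons by auto
    define b where "b = Max (set ys)"
    have b_in: "b \<in> set ys" and "a \<le> b"
      using supermajorized_Cons_imp_le_Max[of a xs' ys] less.prems(4) Cons a p
      by (simp_all add: b_def)
    obtain j where b: "b = p ^ j"
      using less.prems(3) b_in by auto
    define ys' where "ys' = remove1 b ys"
    have ys'_powers: "\<forall>y\<in>set ys'. \<exists>i. y = p ^ i"
      using less.prems(3) notin_set_remove1 by (fastforce simp: ys'_def)
    have sup: "supermajorized xs (b # ys')"
      using less.prems(4) supermajorized_remove1_iff[OF b_in] by (simp add: ys'_def)
    have squares: "(\<Sum>y\<leftarrow>ys. y\<^sup>2) = b\<^sup>2 + (\<Sum>y\<leftarrow>ys'. y\<^sup>2)"
      using sum_list_map_remove1[OF b_in] by (simp add: ys'_def)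
    have "embeds xs (b # ys')"
    proof (cases "a = b")
      case True
      have "supermajorized xs' ys'"
        using supermajorized_Cons_cancel[of b xs' ys'] sup xs_le True Cons by simp
      then have "embeds xs' ys'"
        using less.hyps[of ys' xs'] less.prems(1,2) Cons ys'_powers squares b p by simp
      then show ?thesis
        using True Cons by (simp add: embeds_Cons)
    next
      case False
      with \<open>a \<le> b\<close> a b have "p ^ k < p ^ j"
        by simp
      with p sup xs_le a b obtain zs where "supermajorized xs zs" and "embeds zs (b # ys')"
        and "(\<Sum>z\<leftarrow>zs. z\<^sup>2) < (\<Sum>y\<leftarrow>ys. y\<^sup>2)" and "set zs \<subseteq> insert (p ^ (j - 1)) (set ys')"
        using supermajorized_split_largest_power[of p k j xs ys'] squares by auto
      moreover from this have "\<forall>z\<in>set zs. \<exists>i. z = p ^ i"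
        using ys'_powers by blast
      ultimately show ?thesis
        using less.hyps[of zs xs] less.prems(1,2) embeds_trans by blast
    qed
    then show ?thesis
      using embeds_trans embeds_if_mset_eq[of "b # ys'" ys] b_in by (simp add: ys'_def)
  qed
qed

theorem theorem3p2:
  fixes p :: nat and lam mu :: "nat list"
  assumes "p \<ge> 2"
    and "integral_partition lam" and "integral_partition mu"
    and "\<forall>a\<in>set lam. \<exists>i::nat. a = p ^ i"
    and "\<forall>b\<in>set mu. \<exists>i::nat. b = p ^ i"
  shows "embeds lam mu \<longleftrightarrow> supermajorized lam mu"
proof
  show "embeds lam mu \<Longrightarrow> supermajorized lam mu"
    by (rule embeds_imp_supermajorized)
  show "supermajorized lam mu \<Longrightarrow> embeds lam mu"
    using supermajorized_imp_embeds_powers[OF assms(1)] assms(2,4,5)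
    unfolding integral_partition_def by blast
qed

end
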